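(* Let $\beta\in(0,1)$, let $\{\mathcal F_i(t)\}_{t\in\mathbb N_0}$ be a filtration on a complete probability space, and let $\{h_i'(t)\}_{t\in\mathbb N}$ be positive, almost surely decreasing, bounded and predictable. Then for every $s_i\in\mathbb N_0$ and every $t\ge s_i$, $h_i'(t+1)=(1-\beta)\underline M_i(s_i,t)$ almost surely.
   Context: Predictable: $h_i'(t)$ is $\mathcal F_i(t-1)$-measurable. With $\beta^\infty:=0$ and $\mathcal S_i(t)$ the stopping times valued in $\{t,t+1,\dots\}\cup\{\infty\}$, set $V_i(t;m):=\operatorname{ess\,sup}_{\tau\in\mathcal S_i(t)}\mathbb E[\sum_{u=t}^{\tau-1}\beta^{u-t}h_i'(u+1)+m\beta^{\tau-t}\mid\mathcal F_i(t)]$ for $m\ge0$ (a.s. continuous in $m$, so it may be evaluated at random $m$). Gittins index: $M_i(t):=\operatorname{ess\,sup}\{X:X>0,\ X\ \mathcal F_i(t)\text{-measurable},\ V_i(t;X)\ge X\}$; lower envelope $\underline M_i(s,t):=\min_{s\le u\le t}M_i(u)$. *)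

theory Defs
  imports "HOL-Probability.Probability" "HOL-Library.Extended_Nat"
begin

definition stopping_times_from ::
  "'a measure \<Rightarrow> (nat \<Rightarrow> 'a measure) \<Rightarrow> nat \<Rightarrow> ('a \<Rightarrow> enat) set" where
  "stopping_times_from M F t =
     {\<tau>. (\<forall>\<omega>\<in>space M. enat t \<le> \<tau> \<omega>) \<and>
          (\<forall>n::nat. {\<omega>\<in>space M. \<tau> \<omega> = enat n} \<in> sets (F n))}"

definition ess_sup_family ::
  "'a measure \<Rightarrow> 'a measure \<Rightarrow> ('a \<Rightarrow> real) set \<Rightarrow> ('a \<Rightarrow> real)" where
  "ess_sup_family M N S =
     (SOME g. g \<in> borel_measurable N \<and> (\<forall>f\<in>S. AE \<omega> in M. f \<omega> \<le> g \<omega>) \<and>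
        (\<forall>g'. g' \<in> borel_measurable N \<and> (\<forall>f\<in>S. AE \<omega> in M. f \<omega> \<le> g' \<omega>)
              \<longrightarrow> (AE \<omega> in M. g \<omega> \<le> g' \<omega>)))"

definition disc_payoff ::
  "real \<Rightarrow> (nat \<Rightarrow> 'a \<Rightarrow> real) \<Rightarrow> nat \<Rightarrow> ('a \<Rightarrow> enat) \<Rightarrow> ('a \<Rightarrow> real) \<Rightarrow> 'a \<Rightarrow> real" where
  "disc_payoff \<beta> h t \<tau> m \<omega> =
     (case \<tau> \<omega> of
        enat k \<Rightarrow> (\<Sum>u\<in>{t..<k}. \<beta> ^ (u - t) * h (u + 1) \<omega>) + m \<omega> * \<beta> ^ (k - t)
      | \<infinity> \<Rightarrow> (\<Sum>n. \<beta> ^ n * h (t + n + 1) \<omega>))"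

definition value_fn ::
  "'a measure \<Rightarrow> (nat \<Rightarrow> 'a measure) \<Rightarrow> real \<Rightarrow> (nat \<Rightarrow> 'a \<Rightarrow> real) \<Rightarrow> nat \<Rightarrow> ('a \<Rightarrow> real) \<Rightarrow> 'a \<Rightarrow> real" where
  "value_fn M F \<beta> h t m =
     ess_sup_family M (F t)
       ((\<lambda>\<tau>. real_cond_exp M (F t) (disc_payoff \<beta> h t \<tau> m)) ` stopping_times_from M F t)"

definition gittins_index ::
  "'a measure \<Rightarrow> (nat \<Rightarrow> 'a measure) \<Rightarrow> real \<Rightarrow> (nat \<Rightarrow> 'a \<Rightarrow> real) \<Rightarrow> nat \<Rightarrow> 'a \<Rightarrow> real" where
  "gittins_index M F \<beta> h t =
     ess_sup_family M (F t)
       {X. X \<in> borel_measurable (F t) \<and> (\<forall>\<omega>\<in>space M. X \<omega> > 0) \<and>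
           (AE \<omega> in M. value_fn M F \<beta> h t X \<omega> > X \<omega>)}"

definition lower_envelope ::
  "'a measure \<Rightarrow> (nat \<Rightarrow> 'a measure) \<Rightarrow> real \<Rightarrow> (nat \<Rightarrow> 'a \<Rightarrow> real) \<Rightarrow> nat \<Rightarrow> nat \<Rightarrow> 'a \<Rightarrow> real" where
  "lower_envelope M F \<beta> h s t \<omega> = Min ((\<lambda>u. gittins_index M F \<beta> h u \<omega>) ` {s..t})"

end

theory Submission
  imports Defs
begin

text \<open>If the rewards decrease along every path, the optimal way to play the arm against a
  retirement reward \<open>X\<close> is myopic: continue exactly as long as the next reward \<open>h (u + 1)\<close>
  exceeds the retirement rate \<open>(1 - \<beta>) X\<close>, since the discounted payoff of a deterministic
  decreasing stream first increases and then decreases in the stopping index. Hence playing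
  is strictly better than retiring at time \<open>t\<close> iff \<open>(1 - \<beta>) X < h (t + 1)\<close>, so the Gittins
  index is \<open>h (t + 1) / (1 - \<beta>)\<close>, which is itself decreasing in \<open>t\<close>: its running minimum is
  its current value.\<close>

section \<open>Stopping a deterministic discounted reward stream\<close>

definition retire_payoff :: "real \<Rightarrow> (nat \<Rightarrow> real) \<Rightarrow> real \<Rightarrow> enat \<Rightarrow> real" where
  "retire_payoff \<beta> b x n =
     (case n of enat n \<Rightarrow> (\<Sum>i<n. \<beta> ^ i * b i) + x * \<beta> ^ n | \<infinity> \<Rightarrow> (\<Sum>i. \<beta> ^ i * b i))"

definition first_at_most :: "(nat \<Rightarrow> real) \<Rightarrow> real \<Rightarrow> enat" where
  "first_at_most b c = (if \<exists>n. b n \<le> c then enat (LEAST n. b n \<le> c) else \<infinity>)"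

lemma first_at_most_eq_enat_iff:
  "first_at_most b c = enat n \<longleftrightarrow> b n \<le> c \<and> (\<forall>i<n. c < b i)"
proof
  assume "first_at_most b c = enat n"
  then have "\<exists>n. b n \<le> c" and n: "n = (LEAST n. b n \<le> c)"
    by (auto simp: first_at_most_def split: if_splits)
  then have "b n \<le> c"
    by (metis LeastI_ex)
  moreover have "c < b i" if "i < n" for i
    using not_less_Least[of i "\<lambda>n. b n \<le> c"] that n by simp
  ultimately show "b n \<le> c \<and> (\<forall>i<n. c < b i)"
    by blast
next
  assume *: "b n \<le> c \<and> (\<forall>i<n. c < b i)"
  have "(LEAST n. b n \<le> c) = n"
  proof (rule Least_equality)
    show "b n \<le> c" using * by simp
    fix y assume "b y \<le> c"
    then show "n \<le> y" using * by (meson not_le)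
  qed
  then show "first_at_most b c = enat n"
    unfolding first_at_most_def using * by auto
qed

lemma
  fixes \<beta> B :: real and b :: "nat \<Rightarrow> real"
  assumes "0 \<le> \<beta>" "\<beta> < 1" "\<And>n. 0 \<le> b n" "\<And>n. b n \<le> B"
  shows summable_discounted: "summable (\<lambda>n. \<beta> ^ n * b n)"
    and suminf_discounted_le: "(\<Sum>n. \<beta> ^ n * b n) \<le> B / (1 - \<beta>)"
proof -
  have geometric: "(\<lambda>n. \<beta> ^ n * B) sums (B / (1 - \<beta>))"
    using sums_mult2[OF geometric_sums, of \<beta> B] assms(1,2) by simp
  show summable: "summable (\<lambda>n. \<beta> ^ n * b n)"
    by (rule summable_comparison_test[OF _ sums_summable[OF geometric]])
      (use assms in \<open>auto intro!: mult_left_mono\<close>)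
  show "(\<Sum>n. \<beta> ^ n * b n) \<le> B / (1 - \<beta>)"
    using suminf_le[OF _ summable sums_summable[OF geometric]] sums_unique[OF geometric] assms
    by (simp add: mult_left_mono)
qed

lemma
  fixes \<beta> B x :: real and b :: "nat \<Rightarrow> real"
  assumes "0 \<le> \<beta>" "\<beta> < 1" "\<And>n. 0 \<le> b n" "\<And>n. b n \<le> B" "0 \<le> x"
  shows retire_payoff_nonneg: "0 \<le> retire_payoff \<beta> b x n"
    and retire_payoff_le: "retire_payoff \<beta> b x n \<le> x + B / (1 - \<beta>)"
proof -
  note summable = summable_discounted[of \<beta> b B, OF assms(1-4)]
  note bound = suminf_discounted_le[of \<beta> b B, OF assms(1-4)]
  have terms_nonneg: "0 \<le> \<beta> ^ i * b i" for i
    using assms(1,3) by simp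
  show "0 \<le> retire_payoff \<beta> b x n"
  proof (cases n)
    case (enat n)
    then show ?thesis
      using assms(1,5) terms_nonneg by (simp add: retire_payoff_def sum_nonneg)
  qed (simp add: retire_payoff_def suminf_nonneg[OF summable terms_nonneg])
  show "retire_payoff \<beta> b x n \<le> x + B / (1 - \<beta>)"
  proof (cases n)
    case (enat n)
    have "(\<Sum>i<n. \<beta> ^ i * b i) \<le> (\<Sum>i. \<beta> ^ i * b i)"
      by (rule sum_le_suminf[OF summable]) (use terms_nonneg in auto)
    moreover have "x * \<beta> ^ n \<le> x"
      using assms(1,2,5) by (simp add: mult_left_le power_le_one)
    ultimately show ?thesis
      using bound enat by (simp add: retire_payoff_def)
  qed (use bound assms(5) in \<open>simp add: retire_payoff_def\<close>)
qed

lemma retire_payoff_Suc_diff: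
  "retire_payoff \<beta> b x (enat (Suc n)) - retire_payoff \<beta> b x (enat n) = \<beta> ^ n * (b n - (1 - \<beta>) * x)"
  by (simp add: retire_payoff_def algebra_simps)

lemma retire_payoff_tendsto_infinity:
  fixes \<beta> B x :: real and b :: "nat \<Rightarrow> real"
  assumes "0 \<le> \<beta>" "\<beta> < 1" "\<And>n. 0 \<le> b n" "\<And>n. b n \<le> B"
  shows "(\<lambda>n. retire_payoff \<beta> b x (enat n)) \<longlonglongrightarrow> retire_payoff \<beta> b x \<infinity>"
proof -
  have "(\<lambda>n. (\<Sum>i<n. \<beta> ^ i * b i) + x * \<beta> ^ n) \<longlonglongrightarrow> (\<Sum>i. \<beta> ^ i * b i) + x * 0"
    using assms(1,2) by (intro tendsto_add tendsto_mult_left LIMSEQ_power_zero summable_LIMSEQ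
        summable_discounted[of \<beta> b B, OF assms]) simp
  then show ?thesis
    by (simp add: retire_payoff_def)
qed

lemma retire_payoff_le_at_first:
  fixes \<beta> x :: real and b :: "nat \<Rightarrow> real"
  assumes "0 \<le> \<beta>" "decseq b" "b K \<le> (1 - \<beta>) * x" "\<And>i. i < K \<Longrightarrow> (1 - \<beta>) * x < b i"
  shows "retire_payoff \<beta> b x (enat m) \<le> retire_payoff \<beta> b x (enat K)"
proof -
  let ?Q = "\<lambda>n. retire_payoff \<beta> b x (enat n)"
  show ?thesis
  proof (cases "m \<le> K")
    case True
    have "?Q i \<le> ?Q (Suc i)" if "i \<in> {..<K}" for i
    proof -
      have "0 \<le> \<beta> ^ i * (b i - (1 - \<beta>) * x)"
        using assms(1) assms(4)[of i] that by simp
      then show ?thesis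
        using retire_payoff_Suc_diff[of \<beta> b x i] by linarith
    qed
    then show ?thesis
      by (rule lift_Suc_mono_le_ivl[of "{..<K}"]) (use True in auto)
  next
    case False
    have "?Q (Suc i) \<le> ?Q i" if "i \<in> {K..}" for i
    proof -
      have "b i \<le> (1 - \<beta>) * x"
        using decseqD[OF assms(2), of K i] that assms(3) by simp
      then have "\<beta> ^ i * (b i - (1 - \<beta>) * x) \<le> 0"
        using assms(1) by (simp add: mult_nonneg_nonpos)
      then show ?thesis
        using retire_payoff_Suc_diff[of \<beta> b x i] by linarith
    qed
    then show ?thesis
      by (rule lift_Suc_antimono_le_ivl[of "{K..}"]) (use False in auto)
  qed
qed

lemma retire_payoff_le_first_at_most:
  fixes \<beta> B x :: real and b :: "nat \<Rightarrow> real"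
  assumes "0 \<le> \<beta>" "\<beta> < 1" "\<And>n. 0 \<le> b n" "\<And>n. b n \<le> B" and "decseq b"
  shows "retire_payoff \<beta> b x e \<le> retire_payoff \<beta> b x (first_at_most b ((1 - \<beta>) * x))"
proof -
  let ?Q = "\<lambda>n. retire_payoff \<beta> b x (enat n)"
  have limit: "?Q \<longlonglongrightarrow> retire_payoff \<beta> b x \<infinity>"
    by (rule retire_payoff_tendsto_infinity[OF assms(1-4)])
  show ?thesis
  proof (cases "first_at_most b ((1 - \<beta>) * x)")
    case (enat K)
    then have Q_le_K: "?Q m \<le> ?Q K" for m
      using retire_payoff_le_at_first[OF assms(1,5)] unfolding first_at_most_eq_enat_iff by blast
    then have "retire_payoff \<beta> b x \<infinity> \<le> ?Q K"
      by (intro LIMSEQ_le_const2[OF limit]) blast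
    with Q_le_K show ?thesis
      using enat by (cases e) auto
  next
    case infinity
    then have "(1 - \<beta>) * x < b n" for n
      unfolding first_at_most_def by (auto simp: not_le split: if_splits)
    then have increment_nonneg: "0 \<le> \<beta> ^ n * (b n - (1 - \<beta>) * x)" for n
      using assms(1) by (simp add: less_imp_le)
    have "?Q n \<le> ?Q (Suc n)" for n
      using retire_payoff_Suc_diff[of \<beta> b x n] increment_nonneg[of n] by linarith
    then have "incseq ?Q"
      by (rule incseq_SucI)
    then have "?Q m \<le> retire_payoff \<beta> b x \<infinity>" for m
      using limit by (rule incseq_le)
    then show ?thesis
      using infinity by (cases e) auto
  qed
qed

section \<open>Conditional expectations, essential suprema and stopping times\<close>

context sigma_finite_subalgebra
begin

lemma real_cond_exp_nonneg_eq:
  assumes [measurable]: "f \<in> borel_measurable M" and "AE x in M. 0 \<le> f x"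
  shows "AE x in M. real_cond_exp M F f x = enn2real (nn_cond_exp M F (\<lambda>x. ennreal (f x)) x)"
proof -
  have "AE x in M. ennreal (- f x) = 0"
    using assms(2) by (auto simp: ennreal_neg)
  then have "AE x in M. nn_cond_exp M F (\<lambda>x. ennreal (- f x)) x = nn_cond_exp M F (\<lambda>x. 0) x"
    by (intro nn_cond_exp_cong) auto
  moreover have "AE x in M. 0 = nn_cond_exp M F (\<lambda>x. 0) x"
    by (rule nn_cond_exp_F_meas) auto
  ultimately show ?thesis
    unfolding real_cond_exp_def by auto
qed

text \<open>Unlike \<open>real_cond_exp_F_meas\<close> and \<open>real_cond_exp_mono\<close>, the next two lemmas need no
  integrability: nonnegativity, and an \<open>F\<close>-measurable bound, keep the conditional expectations finite.\<close>

lemma real_cond_exp_F_meas_nonneg: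
  assumes [measurable]: "f \<in> borel_measurable F" and "AE x in M. 0 \<le> f x"
  shows "AE x in M. real_cond_exp M F f x = f x"
proof -
  have f_meas [measurable]: "f \<in> borel_measurable M"
    using measurable_from_subalg[OF subalg assms(1)] .
  have "AE x in M. ennreal (f x) = nn_cond_exp M F (\<lambda>x. ennreal (f x)) x"
    by (rule nn_cond_exp_F_meas) auto
  then show ?thesis
    using real_cond_exp_nonneg_eq[OF f_meas assms(2)] assms(2) by eventually_elim (metis enn2real_ennreal)
qed

lemma real_cond_exp_mono_nonneg:
  assumes [measurable]: "f \<in> borel_measurable M" "g \<in> borel_measurable M" "C \<in> borel_measurable F"
    and "AE x in M. 0 \<le> f x" "AE x in M. f x \<le> g x" "AE x in M. g x \<le> C x"
  shows "AE x in M. real_cond_exp M F f x \<le> real_cond_exp M F g x"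
proof -
  have [measurable]: "C \<in> borel_measurable M"
    using measurable_from_subalg[OF subalg assms(3)] .
  have g_nonneg: "AE x in M. 0 \<le> g x"
    using assms(4,5) by auto
  have "AE x in M. nn_cond_exp M F (\<lambda>x. ennreal (f x)) x \<le> nn_cond_exp M F (\<lambda>x. ennreal (g x)) x"
    by (rule nn_cond_exp_mono) (use assms(5) in \<open>auto intro: ennreal_leI\<close>)
  moreover have "AE x in M. nn_cond_exp M F (\<lambda>x. ennreal (g x)) x \<le> nn_cond_exp M F (\<lambda>x. ennreal (C x)) x"
    by (rule nn_cond_exp_mono) (use assms(6) in \<open>auto intro: ennreal_leI\<close>)
  moreover have "AE x in M. ennreal (C x) = nn_cond_exp M F (\<lambda>x. ennreal (C x)) x"
    by (rule nn_cond_exp_F_meas) auto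
  ultimately show ?thesis
    using real_cond_exp_nonneg_eq[OF assms(1) assms(4)] real_cond_exp_nonneg_eq[OF assms(2) g_nonneg]
  proof eventually_elim
    case (elim x)
    then have "nn_cond_exp M F (\<lambda>x. ennreal (g x)) x < top"
      by (metis ennreal_less_top order_le_less_trans)
    with elim show ?case
      by (auto intro: enn2real_mono)
  qed
qed

end

definition is_ess_sup_family :: "'a measure \<Rightarrow> 'a measure \<Rightarrow> ('a \<Rightarrow> real) set \<Rightarrow> ('a \<Rightarrow> real) \<Rightarrow> bool" where
  "is_ess_sup_family M N S g \<longleftrightarrow>
     g \<in> borel_measurable N \<and> (\<forall>f\<in>S. AE \<omega> in M. f \<omega> \<le> g \<omega>) \<and>
     (\<forall>g'. g' \<in> borel_measurable N \<and> (\<forall>f\<in>S. AE \<omega> in M. f \<omega> \<le> g' \<omega>)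
        \<longrightarrow> (AE \<omega> in M. g \<omega> \<le> g' \<omega>))"

lemma ess_sup_family_AE_eq:
  assumes "is_ess_sup_family M N S g"
  shows "AE \<omega> in M. ess_sup_family M N S \<omega> = g \<omega>"
proof -
  have "ess_sup_family M N S = (SOME g. is_ess_sup_family M N S g)"
    unfolding ess_sup_family_def is_ess_sup_family_def ..
  then have "is_ess_sup_family M N S (ess_sup_family M N S)"
    using someI[of "is_ess_sup_family M N S", OF assms] by simp
  then have "AE \<omega> in M. ess_sup_family M N S \<omega> \<le> g \<omega>" "AE \<omega> in M. g \<omega> \<le> ess_sup_family M N S \<omega>"
    using assms unfolding is_ess_sup_family_def by blast+
  then show ?thesis
    by eventually_elim simp
qed

lemma enat_in_stopping_times_from:
  assumes "\<And>n. space (F n) = space M" and "t \<le> k"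
  shows "(\<lambda>_. enat k) \<in> stopping_times_from M F t"
proof -
  have "{\<omega> \<in> space M. enat k = enat n} = (if k = n then space (F n) else {})" for n
    using assms(1) by auto
  then show ?thesis
    using assms(2) unfolding stopping_times_from_def by simp
qed

lemma stopping_times_from_measurable:
  assumes "\<And>n. subalgebra M (F n)" and "\<tau> \<in> stopping_times_from M F t"
  shows "\<tau> \<in> measurable M (count_space UNIV)"
proof -
  have finite: "{\<omega> \<in> space M. \<tau> \<omega> = enat n} \<in> sets M" for n
    using assms(1)[of n] assms(2) unfolding stopping_times_from_def subalgebra_def by blast
  have "{\<omega> \<in> space M. \<tau> \<omega> = \<infinity>} = space M - (\<Union>n. {\<omega> \<in> space M. \<tau> \<omega> = enat n})"
    by auto
  then have "{\<omega> \<in> space M. \<tau> \<omega> = \<infinity>} \<in> sets M"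
    using finite by auto
  then have "\<tau> -` {e} \<inter> space M \<in> sets M" for e
    using finite by (cases e) (auto simp: vimage_def Int_def conj_commute)
  then show ?thesis
    unfolding measurable_count_space_eq2_countable by auto
qed

lemma disc_payoff_eq_retire_payoff:
  assumes "enat t \<le> \<tau> \<omega>"
  shows "disc_payoff \<beta> h t \<tau> X \<omega> = retire_payoff \<beta> (\<lambda>i. h (t + i + 1) \<omega>) (X \<omega>) (\<tau> \<omega> - enat t)"
proof (cases "\<tau> \<omega>")
  case (enat k)
  then obtain d where "k = t + d"
    using assms by (metis enat_ord_simps(1) le_add_diff_inverse)
  moreover have "(\<Sum>u\<in>{t..<t + d}. \<beta> ^ (u - t) * h (u + 1) \<omega>) = (\<Sum>i<d. \<beta> ^ i * h (t + i + 1) \<omega>)"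
    using sum.shift_bounds_nat_ivl[of "\<lambda>u. \<beta> ^ (u - t) * h (u + 1) \<omega>" 0 t d]
    by (simp add: atLeast0LessThan add.commute)
  ultimately show ?thesis
    using enat by (simp add: disc_payoff_def retire_payoff_def)
qed (simp add: disc_payoff_def retire_payoff_def)

section \<open>The Gittins index of a deteriorating arm\<close>

locale deteriorating_arm =
  fixes M :: "'a measure" and F :: "nat \<Rightarrow> 'a measure"
    and h :: "nat \<Rightarrow> 'a \<Rightarrow> real" and \<beta> :: real
  assumes beta: "0 < \<beta>" "\<beta> < 1"
    and prob: "prob_space M"
    and filt: "filtration (space M) F"
    and sub: "\<And>t. subalgebra M (F t)"
    and predictable: "\<And>t. t \<ge> 1 \<Longrightarrow> h t \<in> borel_measurable (F (t - 1))"
    and positive: "\<And>t \<omega>. t \<ge> 1 \<Longrightarrow> \<omega> \<in> space M \<Longrightarrow> h t \<omega> > 0"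
    and bounded: "\<exists>B. \<forall>t \<ge> 1. \<forall>\<omega>\<in>space M. h t \<omega> \<le> B"
    and decreasing: "AE \<omega> in M. \<forall>t \<ge> 1. h (t + 1) \<omega> \<le> h t \<omega>"
begin

definition reward_bound :: real where
  "reward_bound = (SOME B. \<forall>t \<ge> 1. \<forall>\<omega>\<in>space M. h t \<omega> \<le> B)"

lemma h_le_reward_bound: "\<omega> \<in> space M \<Longrightarrow> h (u + 1) \<omega> \<le> reward_bound"
  using someI_ex[OF bounded] unfolding reward_bound_def by simp

lemma h_pos: "\<omega> \<in> space M \<Longrightarrow> 0 < h (u + 1) \<omega>"
  using positive by simp

lemma reward_bound_nonneg: "0 \<le> reward_bound"
proof -
  obtain \<omega> where "\<omega> \<in> space M"
    using prob_space.not_empty[OF prob] by blast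
  then show ?thesis
    using h_le_reward_bound[of \<omega> 0] h_pos[of \<omega> 0] by simp
qed

lemma sigma_finite_subalgebra_F: "sigma_finite_subalgebra M (F t)"
  by (rule finite_measure_subalgebra_is_sigma_finite)
    (simp add: finite_measure_subalgebra_def finite_measure_subalgebra_axioms_def sub
       prob_space.axioms(1)[OF prob])

lemma space_F: "space (F t) = space M"
  using sub[of t] by (simp add: subalgebra_def)

lemma measurable_F_mono: "f \<in> borel_measurable (F i) \<Longrightarrow> i \<le> j \<Longrightarrow> f \<in> borel_measurable (F j)"
  using filtration.sets_F_mono[OF filt, of i j] unfolding measurable_def space_F by auto

lemma measurable_F_M: "f \<in> borel_measurable (F i) \<Longrightarrow> f \<in> borel_measurable M"
  by (rule measurable_from_subalg[OF sub])

lemma h_measurable_F: "u \<le> j \<Longrightarrow> h (u + 1) \<in> borel_measurable (F j)"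
  using predictable[of "u + 1"] by (auto intro: measurable_F_mono)

lemma next_reward_measurable [measurable]: "h (t + 1) \<in> borel_measurable (F t)"
  using h_measurable_F[of t t] by simp

lemma h_measurable [measurable]: "h (u + 1) \<in> borel_measurable M"
  using h_measurable_F[of u u] measurable_F_M by blast

lemma AE_rewards_antimono: "AE \<omega> in M. \<forall>u v. u \<le> v \<longrightarrow> h (v + 1) \<omega> \<le> h (u + 1) \<omega>"
  using decreasing
proof eventually_elim
  case (elim \<omega>)
  then have "h (Suc n + 1) \<omega> \<le> h (n + 1) \<omega>" for n
    using elim[rule_format, of "n + 1"] by simp
  then show ?case
    using lift_Suc_antimono_le[of "\<lambda>n. h (n + 1) \<omega>"] by blast
qed

lemma AE_future_rewards_decseq: "AE \<omega> in M. \<forall>t. decseq (\<lambda>i. h (t + i + 1) \<omega>)"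
  using AE_rewards_antimono by eventually_elim (simp add: decseq_def)

lemma disc_payoff_measurable:
  assumes "\<tau> \<in> stopping_times_from M F t" and [measurable]: "X \<in> borel_measurable M"
  shows "disc_payoff \<beta> h t \<tau> X \<in> borel_measurable M"
proof -
  define P where "P e \<omega> = retire_payoff \<beta> (\<lambda>i. h (t + i + 1) \<omega>) (X \<omega>) (e - enat t)" for e \<omega>
  have "P e \<in> borel_measurable M" for e
  proof (cases "e - enat t")
    case (enat n)
    then have "P e = (\<lambda>\<omega>. (\<Sum>i<n. \<beta> ^ i * h (t + i + 1) \<omega>) + X \<omega> * \<beta> ^ n)"
      by (simp add: P_def retire_payoff_def fun_eq_iff)
    then show ?thesis
      by (simp only:) measurable
  next
    case infinity
    then have "P e = (\<lambda>\<omega>. \<Sum>i. \<beta> ^ i * h (t + i + 1) \<omega>)"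
      by (simp add: P_def retire_payoff_def fun_eq_iff)
    then show ?thesis
      by (simp only:) measurable
  qed
  then have P_measurable: "(\<lambda>\<omega>. P (\<tau> \<omega>) \<omega>) \<in> borel_measurable M"
    by (rule measurable_compose_countable[OF _ stopping_times_from_measurable[OF sub assms(1)]])
  have "disc_payoff \<beta> h t \<tau> X \<omega> = P (\<tau> \<omega>) \<omega>" if "\<omega> \<in> space M" for \<omega>
  proof -
    have "enat t \<le> \<tau> \<omega>"
      using assms(1) that unfolding stopping_times_from_def by blast
    then show ?thesis
      unfolding P_def by (rule disc_payoff_eq_retire_payoff)
  qed
  then have "disc_payoff \<beta> h t \<tau> X \<in> borel_measurable M \<longleftrightarrow> (\<lambda>\<omega>. P (\<tau> \<omega>) \<omega>) \<in> borel_measurable M"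
    by (rule measurable_cong)
  with P_measurable show ?thesis
    by simp
qed

lemma
  assumes "\<omega> \<in> space M" "0 \<le> X \<omega>" "enat t \<le> \<tau> \<omega>"
  shows disc_payoff_nonneg: "0 \<le> disc_payoff \<beta> h t \<tau> X \<omega>"
    and disc_payoff_le: "disc_payoff \<beta> h t \<tau> X \<omega> \<le> X \<omega> + reward_bound / (1 - \<beta>)"
proof -
  have rewards: "0 \<le> h (t + i + 1) \<omega>" "h (t + i + 1) \<omega> \<le> reward_bound" for i
    using h_pos[OF assms(1), of "t + i"] h_le_reward_bound[OF assms(1), of "t + i"] by simp_all
  note bounds = retire_payoff_nonneg retire_payoff_le
  note instances = bounds[of \<beta> "\<lambda>i. h (t + i + 1) \<omega>" reward_bound "X \<omega>", OF _ beta(2) rewards assms(2)]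
  show "0 \<le> disc_payoff \<beta> h t \<tau> X \<omega>"
    unfolding disc_payoff_eq_retire_payoff[of t \<tau> \<omega>, OF assms(3)]
    using instances(1) beta(1) by simp
  show "disc_payoff \<beta> h t \<tau> X \<omega> \<le> X \<omega> + reward_bound / (1 - \<beta>)"
    unfolding disc_payoff_eq_retire_payoff[of t \<tau> \<omega>, OF assms(3)]
    using instances(2) beta(1) by simp
qed

definition retirement_time :: "nat \<Rightarrow> ('a \<Rightarrow> real) \<Rightarrow> 'a \<Rightarrow> enat" where
  "retirement_time t X \<omega> = enat t + first_at_most (\<lambda>i. h (t + i + 1) \<omega>) ((1 - \<beta>) * X \<omega>)"

lemma retirement_time_ge: "enat t \<le> retirement_time t X \<omega>"
  unfolding retirement_time_def by simp

lemma retirement_time_minus: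
  "retirement_time t X \<omega> - enat t = first_at_most (\<lambda>i. h (t + i + 1) \<omega>) ((1 - \<beta>) * X \<omega>)"
  unfolding retirement_time_def by (cases "first_at_most (\<lambda>i. h (t + i + 1) \<omega>) ((1 - \<beta>) * X \<omega>)") simp_all

lemma retirement_time_stopping:
  assumes X: "X \<in> borel_measurable (F t)"
  shows "retirement_time t X \<in> stopping_times_from M F t"
  unfolding stopping_times_from_def
proof (intro CollectI conjI ballI allI retirement_time_ge)
  fix m :: nat
  show "{\<omega> \<in> space M. retirement_time t X \<omega> = enat m} \<in> sets (F m)"
  proof (cases "t \<le> m")
    case False
    then have "retirement_time t X \<omega> \<noteq> enat m" for \<omega>
      using retirement_time_ge[of t X \<omega>] by auto
    then show ?thesis
      by simp
  next
    case True
    then obtain d where m: "m = t + d"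
      using le_Suc_ex by blast
    define A where "A i = {\<omega> \<in> space (F m). h (t + i + 1) \<omega> \<le> (1 - \<beta>) * X \<omega>}" for i
    have A_sets: "A i \<in> sets (F m)" if "i \<le> d" for i
    proof -
      have [measurable]: "h (t + i + 1) \<in> borel_measurable (F m)" "X \<in> borel_measurable (F m)"
        using h_measurable_F[of "t + i" m] measurable_F_mono[OF X True] that m by simp_all
      show ?thesis
        unfolding A_def by measurable
    qed
    have "retirement_time t X \<omega> = enat m \<longleftrightarrow>
        first_at_most (\<lambda>i. h (t + i + 1) \<omega>) ((1 - \<beta>) * X \<omega>) = enat d" for \<omega>
      unfolding retirement_time_def m
      by (cases "first_at_most (\<lambda>i. h (t + i + 1) \<omega>) ((1 - \<beta>) * X \<omega>)") simp_all
    then have "{\<omega> \<in> space M. retirement_time t X \<omega> = enat m} = A d - (\<Union>i<d. A i)"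
      unfolding first_at_most_eq_enat_iff A_def space_F by (auto simp: not_le)
    then show ?thesis
      using A_sets by auto
  qed
qed

lemma disc_payoff_le_retirement_time:
  assumes "decseq (\<lambda>i. h (t + i + 1) \<omega>)" "\<omega> \<in> space M" "enat t \<le> \<tau> \<omega>"
  shows "disc_payoff \<beta> h t \<tau> X \<omega> \<le> disc_payoff \<beta> h t (retirement_time t X) X \<omega>"
  unfolding disc_payoff_eq_retire_payoff[of t \<tau> \<omega>, OF assms(3)]
    disc_payoff_eq_retire_payoff[of t "retirement_time t X" \<omega>, OF retirement_time_ge] retirement_time_minus
proof (rule retire_payoff_le_first_at_most[where B = reward_bound])
  show "0 \<le> h (t + i + 1) \<omega>" "h (t + i + 1) \<omega> \<le> reward_bound" for i
    using h_pos[OF assms(2), of "t + i"] h_le_reward_bound[OF assms(2), of "t + i"] by simp_all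
qed (use beta assms(1) in simp_all)

definition stopped_payoffs :: "nat \<Rightarrow> ('a \<Rightarrow> real) \<Rightarrow> ('a \<Rightarrow> real) set" where
  "stopped_payoffs t X = (\<lambda>\<tau>. real_cond_exp M (F t) (disc_payoff \<beta> h t \<tau> X)) ` stopping_times_from M F t"

lemma value_fn_eq: "value_fn M F \<beta> h t X = ess_sup_family M (F t) (stopped_payoffs t X)"
  unfolding value_fn_def stopped_payoffs_def ..

lemma cond_exp_disc_payoff_le_retirement_time:
  assumes X [measurable]: "X \<in> borel_measurable (F t)" and X_nonneg: "\<And>\<omega>. \<omega> \<in> space M \<Longrightarrow> 0 \<le> X \<omega>"
    and \<tau>: "\<tau> \<in> stopping_times_from M F t"
  shows "AE \<omega> in M. real_cond_exp M (F t) (disc_payoff \<beta> h t \<tau> X) \<omega>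
           \<le> real_cond_exp M (F t) (disc_payoff \<beta> h t (retirement_time t X) X) \<omega>"
proof -
  interpret sigma_finite_subalgebra M "F t"
    by (rule sigma_finite_subalgebra_F)
  have X_M: "X \<in> borel_measurable M"
    using measurable_F_M[OF X] .
  have \<tau>_ge: "enat t \<le> \<tau> \<omega>" if "\<omega> \<in> space M" for \<omega>
    using \<tau> that unfolding stopping_times_from_def by blast
  have "(\<lambda>\<omega>. X \<omega> + reward_bound / (1 - \<beta>)) \<in> borel_measurable (F t)"
    by measurable
  then show ?thesis
  proof (rule real_cond_exp_mono_nonneg[OF disc_payoff_measurable[OF \<tau> X_M]
        disc_payoff_measurable[OF retirement_time_stopping[OF X] X_M]])
    show "AE \<omega> in M. 0 \<le> disc_payoff \<beta> h t \<tau> X \<omega>"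
      using disc_payoff_nonneg X_nonneg \<tau>_ge by auto
    show "AE \<omega> in M. disc_payoff \<beta> h t \<tau> X \<omega> \<le> disc_payoff \<beta> h t (retirement_time t X) X \<omega>"
      using AE_future_rewards_decseq AE_space
      by eventually_elim (auto intro: disc_payoff_le_retirement_time \<tau>_ge)
    show "AE \<omega> in M. disc_payoff \<beta> h t (retirement_time t X) X \<omega> \<le> X \<omega> + reward_bound / (1 - \<beta>)"
      using disc_payoff_le X_nonneg retirement_time_ge by auto
  qed
qed

lemma retirement_time_is_ess_sup:
  assumes "X \<in> borel_measurable (F t)" and "\<And>\<omega>. \<omega> \<in> space M \<Longrightarrow> 0 \<le> X \<omega>"
  shows "is_ess_sup_family M (F t) (stopped_payoffs t X)
           (real_cond_exp M (F t) (disc_payoff \<beta> h t (retirement_time t X) X))"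
proof -
  have "real_cond_exp M (F t) (disc_payoff \<beta> h t (retirement_time t X) X) \<in> stopped_payoffs t X"
    unfolding stopped_payoffs_def using retirement_time_stopping[OF assms(1)] by blast
  moreover have "\<forall>f\<in>stopped_payoffs t X.
      AE \<omega> in M. f \<omega> \<le> real_cond_exp M (F t) (disc_payoff \<beta> h t (retirement_time t X) X) \<omega>"
    unfolding stopped_payoffs_def using cond_exp_disc_payoff_le_retirement_time[OF assms] by blast
  ultimately show ?thesis
    unfolding is_ess_sup_family_def by (metis borel_measurable_cond_exp)
qed

lemma
  assumes "X \<in> borel_measurable (F t)" and "\<And>\<omega>. \<omega> \<in> space M \<Longrightarrow> 0 \<le> X \<omega>"
  shows value_fn_AE_eq: "AE \<omega> in M.
      value_fn M F \<beta> h t X \<omega> = real_cond_exp M (F t) (disc_payoff \<beta> h t (retirement_time t X) X) \<omega>"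
    and cond_exp_disc_payoff_le_value_fn: "\<tau> \<in> stopping_times_from M F t \<Longrightarrow>
      AE \<omega> in M. real_cond_exp M (F t) (disc_payoff \<beta> h t \<tau> X) \<omega> \<le> value_fn M F \<beta> h t X \<omega>"
proof -
  note optimal = retirement_time_is_ess_sup[OF assms]
  show value_eq: "AE \<omega> in M.
      value_fn M F \<beta> h t X \<omega> = real_cond_exp M (F t) (disc_payoff \<beta> h t (retirement_time t X) X) \<omega>"
    unfolding value_fn_eq by (rule ess_sup_family_AE_eq[OF optimal])
  assume "\<tau> \<in> stopping_times_from M F t"
  then have "AE \<omega> in M. real_cond_exp M (F t) (disc_payoff \<beta> h t \<tau> X) \<omega>
      \<le> real_cond_exp M (F t) (disc_payoff \<beta> h t (retirement_time t X) X) \<omega>"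
    using optimal unfolding is_ess_sup_family_def stopped_payoffs_def by blast
  with value_eq show "AE \<omega> in M. real_cond_exp M (F t) (disc_payoff \<beta> h t \<tau> X) \<omega> \<le> value_fn M F \<beta> h t X \<omega>"
    by eventually_elim simp
qed

definition continue_preferred :: "nat \<Rightarrow> ('a \<Rightarrow> real) set" where
  "continue_preferred t = {X. X \<in> borel_measurable (F t) \<and> (\<forall>\<omega>\<in>space M. X \<omega> > 0) \<and>
     (AE \<omega> in M. value_fn M F \<beta> h t X \<omega> > X \<omega>)}"

lemma gittins_index_eq: "gittins_index M F \<beta> h t = ess_sup_family M (F t) (continue_preferred t)"
  unfolding gittins_index_def continue_preferred_def ..

lemma disc_payoff_retirement_time_eq:
  assumes "h (t + 1) \<omega> \<le> (1 - \<beta>) * X \<omega>"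
  shows "disc_payoff \<beta> h t (retirement_time t X) X \<omega> = X \<omega>"
proof -
  have "first_at_most (\<lambda>i. h (t + i + 1) \<omega>) ((1 - \<beta>) * X \<omega>) = enat 0"
    using assms by (simp add: first_at_most_eq_enat_iff)
  then show ?thesis
    by (simp add: disc_payoff_eq_retire_payoff[of t "retirement_time t X" \<omega>, OF retirement_time_ge]
        retirement_time_minus retire_payoff_def)
qed

lemma AE_value_fn_le_retirement_reward:
  assumes X [measurable]: "X \<in> borel_measurable (F t)" and X_nonneg: "\<And>\<omega>. \<omega> \<in> space M \<Longrightarrow> 0 \<le> X \<omega>"
  shows "AE \<omega> in M. h (t + 1) \<omega> < (1 - \<beta>) * X \<omega> \<longrightarrow> value_fn M F \<beta> h t X \<omega> \<le> X \<omega>"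
proof -
  interpret sigma_finite_subalgebra M "F t"
    by (rule sigma_finite_subalgebra_F)
  \<comment> \<open>The \<open>F t\<close>-measurable bound \<open>D\<close> carries the pointwise identity of
    \<open>disc_payoff_retirement_time_eq\<close> through the conditional expectation, although \<open>X\<close> need not
    be integrable.\<close>
  define D where
    "D \<omega> = (if h (t + 1) \<omega> < (1 - \<beta>) * X \<omega> then X \<omega> else X \<omega> + reward_bound / (1 - \<beta>))" for \<omega>
  have D_measurable [measurable]: "D \<in> borel_measurable (F t)"
    unfolding D_def by measurable
  have D_nonneg: "AE \<omega> in M. 0 \<le> D \<omega>"
  proof (rule AE_I2)
    fix \<omega> assume "\<omega> \<in> space M"
    moreover have "0 \<le> reward_bound / (1 - \<beta>)"
      using reward_bound_nonneg beta by simp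
    ultimately show "0 \<le> D \<omega>"
      using X_nonneg by (simp add: D_def)
  qed
  have "disc_payoff \<beta> h t (retirement_time t X) X \<omega> \<le> D \<omega>" if "\<omega> \<in> space M" for \<omega>
    using disc_payoff_retirement_time_eq[of t \<omega> X]
      disc_payoff_le[of \<omega> X t "retirement_time t X", OF that X_nonneg[OF that] retirement_time_ge]
    by (simp add: D_def)
  then have "AE \<omega> in M. real_cond_exp M (F t) (disc_payoff \<beta> h t (retirement_time t X) X) \<omega>
      \<le> real_cond_exp M (F t) D \<omega>"
    using disc_payoff_nonneg[of _ X t "retirement_time t X", OF _ X_nonneg retirement_time_ge]
    by (intro real_cond_exp_mono_nonneg[where C = D] disc_payoff_measurable retirement_time_stopping
        measurable_F_M[OF X] measurable_F_M[OF D_measurable] D_measurable X) simp_all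
  moreover have "AE \<omega> in M. value_fn M F \<beta> h t X \<omega>
      = real_cond_exp M (F t) (disc_payoff \<beta> h t (retirement_time t X) X) \<omega>"
    by (rule value_fn_AE_eq[OF X X_nonneg])
  moreover have "AE \<omega> in M. real_cond_exp M (F t) D \<omega> = D \<omega>"
    by (rule real_cond_exp_F_meas_nonneg[OF D_measurable D_nonneg])
  ultimately show ?thesis
    by eventually_elim (auto simp: D_def split: if_splits)
qed

lemma continue_preferred_AE_le:
  assumes "X \<in> continue_preferred t"
  shows "AE \<omega> in M. (1 - \<beta>) * X \<omega> \<le> h (t + 1) \<omega>"
proof -
  have X: "X \<in> borel_measurable (F t)" "\<And>\<omega>. \<omega> \<in> space M \<Longrightarrow> 0 \<le> X \<omega>"
    and continue: "AE \<omega> in M. X \<omega> < value_fn M F \<beta> h t X \<omega>"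
    using assms unfolding continue_preferred_def by (auto simp: less_imp_le)
  have "AE \<omega> in M. h (t + 1) \<omega> < (1 - \<beta>) * X \<omega> \<longrightarrow> value_fn M F \<beta> h t X \<omega> \<le> X \<omega>"
    using X by (rule AE_value_fn_le_retirement_reward)
  with continue show ?thesis
    by eventually_elim auto
qed

lemma AE_one_step_le_value_fn:
  assumes X [measurable]: "X \<in> borel_measurable (F t)" and X_nonneg: "\<And>\<omega>. \<omega> \<in> space M \<Longrightarrow> 0 \<le> X \<omega>"
  shows "AE \<omega> in M. h (t + 1) \<omega> + X \<omega> * \<beta> \<le> value_fn M F \<beta> h t X \<omega>"
proof -
  interpret sigma_finite_subalgebra M "F t"
    by (rule sigma_finite_subalgebra_F)
  define E where "E \<omega> = h (t + 1) \<omega> + X \<omega> * \<beta>" for \<omega>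
  have E_measurable [measurable]: "E \<in> borel_measurable (F t)"
    unfolding E_def by measurable
  have E_nonneg: "AE \<omega> in M. 0 \<le> E \<omega>"
    using h_pos X_nonneg beta by (intro AE_I2) (simp add: E_def add_nonneg_nonneg less_imp_le)
  have "disc_payoff \<beta> h t (\<lambda>_. enat (t + 1)) X = E"
    by (simp add: fun_eq_iff disc_payoff_def E_def)
  then have "AE \<omega> in M. real_cond_exp M (F t) E \<omega> \<le> value_fn M F \<beta> h t X \<omega>"
    using cond_exp_disc_payoff_le_value_fn[OF X X_nonneg
        enat_in_stopping_times_from[of F M t "t + 1", OF space_F le_add1]]
    by simp
  moreover have "AE \<omega> in M. real_cond_exp M (F t) E \<omega> = E \<omega>"
    by (rule real_cond_exp_F_meas_nonneg[OF E_measurable E_nonneg])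
  ultimately show ?thesis
    by eventually_elim (simp add: E_def)
qed

lemma continue_preferredI:
  assumes X: "X \<in> borel_measurable (F t)"
    and X_pos: "\<And>\<omega>. \<omega> \<in> space M \<Longrightarrow> 0 < X \<omega>"
    and X_below: "\<And>\<omega>. \<omega> \<in> space M \<Longrightarrow> (1 - \<beta>) * X \<omega> < h (t + 1) \<omega>"
  shows "X \<in> continue_preferred t"
proof -
  have "AE \<omega> in M. h (t + 1) \<omega> + X \<omega> * \<beta> \<le> value_fn M F \<beta> h t X \<omega>"
    using X X_pos by (intro AE_one_step_le_value_fn) (auto simp: less_imp_le)
  then have "AE \<omega> in M. X \<omega> < value_fn M F \<beta> h t X \<omega>"
    using AE_space by eventually_elim (use X_below in \<open>force simp: algebra_simps\<close>)
  then show ?thesis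
    unfolding continue_preferred_def using X X_pos by blast
qed

lemma AE_next_index_le:
  assumes "\<forall>X\<in>continue_preferred t. AE \<omega> in M. X \<omega> \<le> g' \<omega>"
  shows "AE \<omega> in M. h (t + 1) \<omega> / (1 - \<beta>) \<le> g' \<omega>"
proof -
  define g where "g \<omega> = h (t + 1) \<omega> / (1 - \<beta>)" for \<omega>
  define X where "X n \<omega> = g \<omega> - g \<omega> / real (Suc (Suc n))" for n \<omega>
  have one_minus_beta: "0 < 1 - \<beta>"
    using beta by simp
  have "X n \<in> continue_preferred t" for n
  proof (rule continue_preferredI)
    show "X n \<in> borel_measurable (F t)"
      unfolding X_def g_def by measurable
    fix \<omega> assume "\<omega> \<in> space M"
    then have h_pos': "0 < h (t + 1) \<omega>"
      using h_pos by simp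
    then have "g \<omega> / real (Suc (Suc n)) < g \<omega>"
      using one_minus_beta by (simp add: g_def divide_less_eq)
    then show "0 < X n \<omega>"
      by (simp add: X_def)
    have "(1 - \<beta>) * X n \<omega> = h (t + 1) \<omega> - h (t + 1) \<omega> / real (Suc (Suc n))"
      using one_minus_beta by (simp add: X_def g_def right_diff_distrib)
    then show "(1 - \<beta>) * X n \<omega> < h (t + 1) \<omega>"
      using h_pos' by simp
  qed
  then have "AE \<omega> in M. \<forall>n. X n \<omega> \<le> g' \<omega>"
    unfolding AE_all_countable using assms by blast
  then show ?thesis
  proof eventually_elim
    case (elim \<omega>)
    have "(\<lambda>n. X n \<omega>) \<longlonglongrightarrow> g \<omega> - 0"
      unfolding X_def by (intro tendsto_diff tendsto_const LIMSEQ_Suc lim_const_over_n)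
    then show ?case
      unfolding g_def[symmetric] using elim by (intro LIMSEQ_le_const2[of "\<lambda>n. X n \<omega>"]) auto
  qed
qed

lemma gittins_index_AE_eq: "AE \<omega> in M. gittins_index M F \<beta> h t \<omega> = h (t + 1) \<omega> / (1 - \<beta>)"
  unfolding gittins_index_eq
proof (rule ess_sup_family_AE_eq, unfold is_ess_sup_family_def, intro conjI ballI allI impI)
  show "(\<lambda>\<omega>. h (t + 1) \<omega> / (1 - \<beta>)) \<in> borel_measurable (F t)"
    by measurable
  have "0 < 1 - \<beta>"
    using beta by simp
  fix X assume "X \<in> continue_preferred t"
  then have "AE \<omega> in M. (1 - \<beta>) * X \<omega> \<le> h (t + 1) \<omega>"
    by (rule continue_preferred_AE_le)
  then show "AE \<omega> in M. X \<omega> \<le> h (t + 1) \<omega> / (1 - \<beta>)"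
    by eventually_elim (simp add: pos_le_divide_eq[OF \<open>0 < 1 - \<beta>\<close>] mult.commute)
qed (rule AE_next_index_le, blast)

lemma lower_envelope_AE_eq:
  assumes "s \<le> t"
  shows "AE \<omega> in M. lower_envelope M F \<beta> h s t \<omega> = h (t + 1) \<omega> / (1 - \<beta>)"
proof -
  have "AE \<omega> in M. \<forall>u. gittins_index M F \<beta> h u \<omega> = h (u + 1) \<omega> / (1 - \<beta>)"
    unfolding AE_all_countable using gittins_index_AE_eq by blast
  then show ?thesis
    using AE_rewards_antimono
  proof eventually_elim
    case (elim \<omega>)
    have "0 < 1 - \<beta>"
      using beta by simp
    have "lower_envelope M F \<beta> h s t \<omega> = Min ((\<lambda>u. h (u + 1) \<omega> / (1 - \<beta>)) ` {s..t})"
      unfolding lower_envelope_def using elim(1) by simp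
    also have "\<dots> = h (t + 1) \<omega> / (1 - \<beta>)"
    proof (rule Min_eqI)
      fix y assume "y \<in> (\<lambda>u. h (u + 1) \<omega> / (1 - \<beta>)) ` {s..t}"
      then show "h (t + 1) \<omega> / (1 - \<beta>) \<le> y"
        using elim(2) \<open>0 < 1 - \<beta>\<close> by (auto intro: divide_right_mono)
    qed (use assms in auto)
    finally show ?case .
  qed
qed

end

theorem lemma7p1:
  fixes M :: "'a measure" and F :: "nat \<Rightarrow> 'a measure"
    and h :: "nat \<Rightarrow> 'a \<Rightarrow> real" and \<beta> :: real
  assumes beta: "0 < \<beta>" "\<beta> < 1"
    and prob: "prob_space M"
    and complete: "complete_measure M"
    and filt: "filtration (space M) F"
    and sub: "\<And>t. subalgebra M (F t)"
    and predictable: "\<And>t. t \<ge> 1 \<Longrightarrow> h t \<in> borel_measurable (F (t - 1))"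
    and positive: "\<And>t \<omega>. t \<ge> 1 \<Longrightarrow> \<omega> \<in> space M \<Longrightarrow> h t \<omega> > 0"
    and bounded: "\<exists>B. \<forall>t \<ge> 1. \<forall>\<omega>\<in>space M. h t \<omega> \<le> B"
    and decreasing: "AE \<omega> in M. \<forall>t \<ge> 1. h (t + 1) \<omega> \<le> h t \<omega>"
  shows "\<forall>s t. s \<le> t \<longrightarrow>
           (AE \<omega> in M. h (t + 1) \<omega> = (1 - \<beta>) * lower_envelope M F \<beta> h s t \<omega>)"
proof (intro allI impI)
  fix s t :: nat
  assume "s \<le> t"
  interpret deteriorating_arm M F h \<beta>
    by (rule deteriorating_arm.intro) (fact beta prob filt sub predictable positive bounded decreasing)+
  have "1 - \<beta> \<noteq> 0"
    using beta by simp
  show "AE \<omega> in M. h (t + 1) \<omega> = (1 - \<beta>) * lower_envelope M F \<beta> h s t \<omega>"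
    using lower_envelope_AE_eq[OF \<open>s \<le> t\<close>] by eventually_elim (use \<open>1 - \<beta> \<noteq> 0\<close> in simp)
qed

end
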